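(* Let $n\geq 1$, let $G$ be a group, and suppose that $S$ is a totally symmetric subset of $G$ with $|S| = n$. If the elements of $S$ have finite order, then $|G|\geq 2^{n-1}n!$.
   Context: A totally symmetric subset of a group $G$ is a finite subset $\{g_1,\ldots,g_n\}$ of $G$ such that (1) the elements $g_i$ pairwise commute, and (2) for every permutation $\sigma\in S_n$ there exists $h\in G$ with $hg_ih^{-1}=g_{\sigma(i)}$ for all $1\leq i\leq n$. *)

theory Defs
  imports "HOL-Algebra.Algebra" "HOL-Combinatorics.Permutations"
begin

definition totally_symmetric :: "('a, 'b) monoid_scheme \<Rightarrow> 'a set \<Rightarrow> bool" where
  "totally_symmetric G S \<longleftrightarrow>
     finite S \<and> S \<subseteq> carrier G \<and>
     (\<forall>x\<in>S. \<forall>y\<in>S. x \<otimes>\<^bsub>G\<^esub> y = y \<otimes>\<^bsub>G\<^esub> x) \<and>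
     (\<forall>\<sigma>. \<sigma> permutes S \<longrightarrow>
        (\<exists>h\<in>carrier G. \<forall>g\<in>S. h \<otimes>\<^bsub>G\<^esub> g \<otimes>\<^bsub>G\<^esub> inv\<^bsub>G\<^esub> h = \<sigma> g))"

end

(* Fix s in S. The products of the 2^(n-1) subsets of S - {s} are pairwise distinct:
   if disjoint U and V had equal products and a were in U, conjugating by an element
   realising the transposition of a and s would fix the product of V but replace a by s
   in U, forcing a = s. These products commute with S, so multiplying each by a fixed
   conjugator realising one of the n! permutations of S gives distinct elements of G:
   the conjugation action on S recovers the permutation, and cancellation the subset. *)

theory Submission
  imports Defs
begin

definition centralizer :: "('a, 'b) monoid_scheme \<Rightarrow> 'a set \<Rightarrow> 'a set" where
  "centralizer G A = {x \<in> carrier G. \<forall>a\<in>A. x \<otimes>\<^bsub>G\<^esub> a = a \<otimes>\<^bsub>G\<^esub> x}"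

context group
begin

lemma centralizer_subset_carrier: "centralizer G A \<subseteq> carrier G"
  unfolding centralizer_def by auto

lemma centralizer_antimono: "A \<subseteq> B \<Longrightarrow> centralizer G B \<subseteq> centralizer G A"
  unfolding centralizer_def by auto

lemma submonoid_centralizer:
  assumes "A \<subseteq> carrier G"
  shows "submonoid (centralizer G A) G"
proof
  fix x y assume x: "x \<in> centralizer G A" and y: "y \<in> centralizer G A"
  have "x \<otimes> y \<otimes> a = a \<otimes> (x \<otimes> y)" if a: "a \<in> A" for a
  proof -
    have xyG: "x \<in> carrier G" "y \<in> carrier G" "a \<in> carrier G"
      using x y a assms centralizer_subset_carrier by auto
    have "x \<otimes> y \<otimes> a = x \<otimes> (a \<otimes> y)"
      using y a xyG unfolding centralizer_def by (simp add: m_assoc)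
    also have "\<dots> = a \<otimes> (x \<otimes> y)"
      using x a xyG unfolding centralizer_def by (simp flip: m_assoc)
    finally show ?thesis .
  qed
  then show "x \<otimes> y \<in> centralizer G A"
    using x y unfolding centralizer_def by auto
qed (use assms in \<open>auto simp: centralizer_def\<close>)

lemma comm_monoid_double_centralizer:
  assumes "A \<subseteq> carrier G" and "\<And>x y. x \<in> A \<Longrightarrow> y \<in> A \<Longrightarrow> x \<otimes> y = y \<otimes> x"
  shows "comm_monoid (G\<lparr>carrier := centralizer G (centralizer G A)\<rparr>)"
proof (rule monoid.monoid_comm_monoidI)
  show "monoid (G\<lparr>carrier := centralizer G (centralizer G A)\<rparr>)"
    using submonoid.submonoid_is_monoid[OF submonoid_centralizer[OF centralizer_subset_carrier]]
    by (simp add: is_monoid)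
next
  have "A \<subseteq> centralizer G A"
    using assms unfolding centralizer_def by auto
  then have "centralizer G (centralizer G A) \<subseteq> centralizer G A"
    by (rule centralizer_antimono)
  then show "x \<otimes>\<^bsub>G\<lparr>carrier := centralizer G (centralizer G A)\<rparr>\<^esub> y
      = y \<otimes>\<^bsub>G\<lparr>carrier := centralizer G (centralizer G A)\<rparr>\<^esub> x"
    if "x \<in> carrier (G\<lparr>carrier := centralizer G (centralizer G A)\<rparr>)"
      and "y \<in> carrier (G\<lparr>carrier := centralizer G (centralizer G A)\<rparr>)" for x y
    using that unfolding centralizer_def by auto
qed

lemma conj_mult_commuting:
  assumes "h \<in> carrier G" "x \<in> carrier G" "g \<in> carrier G" and "x \<otimes> g = g \<otimes> x"
  shows "h \<otimes> x \<otimes> g \<otimes> inv (h \<otimes> x) = h \<otimes> g \<otimes> inv h"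
proof -
  have "h \<otimes> x \<otimes> g \<otimes> inv (h \<otimes> x) = h \<otimes> (x \<otimes> g) \<otimes> inv x \<otimes> inv h"
    using assms(1-3) by (simp add: m_assoc inv_mult_group)
  also have "\<dots> = h \<otimes> g \<otimes> (x \<otimes> inv x) \<otimes> inv h"
    using assms by (simp add: m_assoc)
  also have "\<dots> = h \<otimes> g \<otimes> inv h"
    using assms by simp
  finally show ?thesis .
qed

end

locale commuting_subset = group +
  fixes S :: "'a set"
  assumes finite_S: "finite S"
    and S_subset: "S \<subseteq> carrier G"
    and S_commute: "\<And>x y. x \<in> S \<Longrightarrow> y \<in> S \<Longrightarrow> x \<otimes> y = y \<otimes> x"
begin

text \<open>The double centralizer of a commuting set is a commutative submonoid containing it,
  which is where products over subsets of \<open>S\<close> are formed.\<close>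

abbreviation Z :: "('a, 'b) monoid_scheme" where
  "Z \<equiv> G\<lparr>carrier := centralizer G (centralizer G S)\<rparr>"

sublocale Z: comm_monoid Z
  using S_subset S_commute by (rule comm_monoid_double_centralizer)

definition subset_prod :: "'a set \<Rightarrow> 'a" where
  "subset_prod T = finprod Z id T"

lemma S_subset_double_centralizer: "S \<subseteq> centralizer G (centralizer G S)"
  using S_subset unfolding centralizer_def by auto

lemma subset_prod_in_double_centralizer:
  "T \<subseteq> S \<Longrightarrow> subset_prod T \<in> centralizer G (centralizer G S)"
  unfolding subset_prod_def using S_subset_double_centralizer
  by (intro Z.finprod_closed[simplified]) auto

lemma subset_prod_closed: "T \<subseteq> S \<Longrightarrow> subset_prod T \<in> carrier G"
  using subset_prod_in_double_centralizer centralizer_subset_carrier by blast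

lemma subset_prod_commute:
  assumes "T \<subseteq> S" and "g \<in> S"
  shows "subset_prod T \<otimes> g = g \<otimes> subset_prod T"
proof -
  have "g \<in> centralizer G S"
    using assms(2) S_subset S_commute unfolding centralizer_def by auto
  then show ?thesis
    using subset_prod_in_double_centralizer[OF assms(1)] unfolding centralizer_def by auto
qed

lemma subset_prod_insert:
  assumes "T \<subseteq> S" and "a \<in> S" and "a \<notin> T"
  shows "subset_prod (insert a T) = a \<otimes> subset_prod T"
  unfolding subset_prod_def using assms S_subset_double_centralizer finite_subset[OF _ finite_S]
  by (subst Z.finprod_insert) auto

lemma subset_prod_Un_disjoint:
  assumes "T \<subseteq> S" and "U \<subseteq> S" and "T \<inter> U = {}"
  shows "subset_prod (T \<union> U) = subset_prod T \<otimes> subset_prod U"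
  unfolding subset_prod_def using assms S_subset_double_centralizer finite_subset[OF _ finite_S]
  by (subst Z.finprod_Un_disjoint) auto

lemma subset_prod_conj:
  assumes "T \<subseteq> S" and "\<sigma> permutes S" and "h \<in> carrier G"
    and conj: "\<And>g. g \<in> S \<Longrightarrow> h \<otimes> g \<otimes> inv h = \<sigma> g"
  shows "h \<otimes> subset_prod T \<otimes> inv h = subset_prod (\<sigma> ` T)"
proof -
  have "finite T"
    using assms(1) finite_S by (rule finite_subset)
  then have "h \<otimes> subset_prod T \<otimes> inv h = finprod Z \<sigma> T"
    using assms(1)
  proof (induction T rule: finite_induct)
    case empty
    then show ?case
      using \<open>h \<in> carrier G\<close> by (simp add: subset_prod_def)
  next
    case (insert a T)
    have aG: "a \<in> carrier G" and PG: "subset_prod T \<in> carrier G"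
      using insert.prems S_subset subset_prod_closed by auto
    have "h \<otimes> subset_prod (insert a T) \<otimes> inv h = h \<otimes> (a \<otimes> subset_prod T) \<otimes> inv h"
      using insert by (simp add: subset_prod_insert)
    also have "\<dots> = (h \<otimes> a \<otimes> inv h) \<otimes> (h \<otimes> subset_prod T \<otimes> inv h)"
      using \<open>h \<in> carrier G\<close> aG PG by (simp add: m_assoc inv_solve_left)
    also have "\<dots> = finprod Z \<sigma> (insert a T)"
      using insert conj permutes_in_image[OF \<open>\<sigma> permutes S\<close>] S_subset_double_centralizer
      by (subst Z.finprod_insert) auto
    finally show ?case .
  qed
  also have "\<dots> = subset_prod (\<sigma> ` T)"
  proof -
    have "\<sigma> ` T \<subseteq> S"
      using assms(1,2) by (auto simp: permutes_in_image)
    then show ?thesis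
      unfolding subset_prod_def using S_subset_double_centralizer
      by (subst Z.finprod_reindex) (fastforce intro: permutes_inj_on[OF assms(2)])+
  qed
  finally show ?thesis .
qed

end

locale totally_symmetric_subset = commuting_subset +
  assumes realise_permutation:
    "\<And>\<sigma>. \<sigma> permutes S \<Longrightarrow> \<exists>h\<in>carrier G. \<forall>g\<in>S. h \<otimes> g \<otimes> inv h = \<sigma> g"

lemma totally_symmetric_subsetI:
  "group G \<Longrightarrow> totally_symmetric G S \<Longrightarrow> totally_symmetric_subset G S"
  unfolding totally_symmetric_def totally_symmetric_subset_def totally_symmetric_subset_axioms_def
    commuting_subset_def commuting_subset_axioms_def
  by auto

context totally_symmetric_subset
begin

lemma subset_prod_eq_disjoint_empty:
  assumes "s \<in> S" and U: "U \<subseteq> S - {s}" and V: "V \<subseteq> S - {s}" and "U \<inter> V = {}"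
    and eq: "subset_prod U = subset_prod V"
  shows "U = {}"
proof (rule ccontr)
  assume "U \<noteq> {}"
  then obtain a where "a \<in> U" by blast
  define \<sigma> where "\<sigma> = transpose a s"
  have aS: "a \<in> S" and "a \<noteq> s"
    using U \<open>a \<in> U\<close> by auto
  have \<sigma>: "\<sigma> permutes S"
    unfolding \<sigma>_def using aS \<open>s \<in> S\<close> by (rule permutes_swap_id)
  then obtain h where h: "h \<in> carrier G" and conj: "\<And>g. g \<in> S \<Longrightarrow> h \<otimes> g \<otimes> inv h = \<sigma> g"
    using realise_permutation by blast
  have "\<sigma> ` V = V"
    using V \<open>U \<inter> V = {}\<close> \<open>a \<in> U\<close> unfolding \<sigma>_def by (subst transpose_image_eq) auto
  have "\<sigma> ` U = insert (\<sigma> a) (\<sigma> ` (U - {a}))"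
    using \<open>a \<in> U\<close> by (metis image_insert insert_Diff)
  also have "\<dots> = insert s (U - {a})"
    using U unfolding \<sigma>_def by (subst transpose_image_eq) auto
  finally have U_image: "\<sigma> ` U = insert s (U - {a})" .
  have "U \<subseteq> S" and "V \<subseteq> S" and U_a: "U - {a} \<subseteq> S" and "s \<notin> U - {a}"
    using U V by auto
  have "s \<otimes> subset_prod (U - {a}) = subset_prod (\<sigma> ` U)"
    using subset_prod_insert[OF U_a \<open>s \<in> S\<close> \<open>s \<notin> U - {a}\<close>] U_image by simp
  also have "\<dots> = h \<otimes> subset_prod V \<otimes> inv h"
    using subset_prod_conj[OF \<open>U \<subseteq> S\<close> \<sigma> h conj] eq by simp
  also have "\<dots> = subset_prod U"
    using subset_prod_conj[OF \<open>V \<subseteq> S\<close> \<sigma> h conj] eq \<open>\<sigma> ` V = V\<close> by simp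
  also have "\<dots> = a \<otimes> subset_prod (U - {a})"
    using subset_prod_insert[OF U_a aS] \<open>a \<in> U\<close> by (simp add: insert_absorb)
  finally have "s \<otimes> subset_prod (U - {a}) = a \<otimes> subset_prod (U - {a})" .
  moreover have "s \<in> carrier G" and "a \<in> carrier G"
    using aS \<open>s \<in> S\<close> S_subset by auto
  ultimately have "s = a"
    using subset_prod_closed[OF U_a] by simp
  with \<open>a \<noteq> s\<close> show False by simp
qed

lemma inj_on_subset_prod:
  assumes "s \<in> S"
  shows "inj_on subset_prod (Pow (S - {s}))"
proof (rule inj_onI)
  fix T T' assume T: "T \<in> Pow (S - {s})" and T': "T' \<in> Pow (S - {s})"
    and eq: "subset_prod T = subset_prod T'"
  have split: "subset_prod A = subset_prod (A - B) \<otimes> subset_prod (A \<inter> B)" if "A \<subseteq> S" for A B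
    using subset_prod_Un_disjoint[of "A - B" "A \<inter> B"] that by (auto simp: Un_Diff_Int)
  have "T \<subseteq> S" and "T' \<subseteq> S" and "T - T' \<subseteq> S" and "T' - T \<subseteq> S" and "T \<inter> T' \<subseteq> S"
    using T T' by auto
  have "subset_prod (T - T') \<otimes> subset_prod (T \<inter> T') = subset_prod T"
    using split[OF \<open>T \<subseteq> S\<close>] by simp
  also have "\<dots> = subset_prod (T' - T) \<otimes> subset_prod (T \<inter> T')"
    using split[OF \<open>T' \<subseteq> S\<close>, of T] eq by (simp add: Int_commute)
  finally have "subset_prod (T - T') = subset_prod (T' - T)"
    using right_cancel[OF subset_prod_closed[OF \<open>T \<inter> T' \<subseteq> S\<close>]
        subset_prod_closed[OF \<open>T - T' \<subseteq> S\<close>] subset_prod_closed[OF \<open>T' - T \<subseteq> S\<close>]]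
    by simp
  then have "T - T' = {}" and "T' - T = {}"
    using subset_prod_eq_disjoint_empty[OF assms, of "T - T'" "T' - T"]
      subset_prod_eq_disjoint_empty[OF assms, of "T' - T" "T - T'"] T T'
    by auto
  then show "T = T'" by blast
qed

lemma card_carrier_lower_bound:
  assumes "finite (carrier G)" and "S \<noteq> {}"
  shows "fact (card S) * 2 ^ (card S - 1) \<le> card (carrier G)"
proof -
  obtain s where s: "s \<in> S"
    using assms(2) by blast
  have "\<forall>\<sigma>. \<exists>h. \<sigma> permutes S \<longrightarrow> h \<in> carrier G \<and> (\<forall>g\<in>S. h \<otimes> g \<otimes> inv h = \<sigma> g)"
    using realise_permutation by blast
  then obtain c where c_closed: "\<And>\<sigma>. \<sigma> permutes S \<Longrightarrow> c \<sigma> \<in> carrier G"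
    and c_conj: "\<And>\<sigma> g. \<sigma> permutes S \<Longrightarrow> g \<in> S \<Longrightarrow> c \<sigma> \<otimes> g \<otimes> inv (c \<sigma>) = \<sigma> g"
    by metis
  define F where "F = (\<lambda>(\<sigma>, T). c \<sigma> \<otimes> subset_prod T)"
  define D where "D = {\<sigma>. \<sigma> permutes S} \<times> Pow (S - {s})"
  have F_closed: "F (\<sigma>, T) \<in> carrier G" if "(\<sigma>, T) \<in> D" for \<sigma> T
    using that c_closed subset_prod_closed unfolding F_def D_def by auto
  have F_conj: "F (\<sigma>, T) \<otimes> g \<otimes> inv (F (\<sigma>, T)) = \<sigma> g" if "(\<sigma>, T) \<in> D" and "g \<in> S" for \<sigma> T g
  proof -
    have "T \<subseteq> S" and "\<sigma> permutes S"
      using that(1) unfolding D_def by auto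
    then show ?thesis
      using that(2) c_closed c_conj subset_prod_closed subset_prod_commute S_subset
        conj_mult_commuting[of "c \<sigma>" "subset_prod T" g]
      unfolding F_def by auto
  qed
  have "inj_on F D"
  proof (rule inj_onI, clarify)
    fix \<sigma> T \<tau> T' assume p: "(\<sigma>, T) \<in> D" and q: "(\<tau>, T') \<in> D" and eq: "F (\<sigma>, T) = F (\<tau>, T')"
    have "\<sigma> = \<tau>"
    proof
      fix x show "\<sigma> x = \<tau> x"
        using F_conj[OF p, of x] F_conj[OF q, of x] eq p q
        by (cases "x \<in> S") (auto simp: D_def permutes_not_in)
    qed
    moreover have "\<tau> permutes S" and "T \<subseteq> S" and "T' \<subseteq> S"
      using p q unfolding D_def by auto
    ultimately have "subset_prod T = subset_prod T'"
      using eq c_closed subset_prod_closed unfolding F_def by auto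
    then have "T = T'"
      using inj_on_subset_prod[OF s] p q unfolding D_def by (auto dest: inj_onD)
    with \<open>\<sigma> = \<tau>\<close> show "\<sigma> = \<tau> \<and> T = T'" by simp
  qed
  moreover have "F ` D \<subseteq> carrier G"
    using F_closed by auto
  ultimately have "card D \<le> card (carrier G)"
    using assms(1) by (rule card_inj_on_le)
  moreover have "card D = fact (card S) * 2 ^ (card S - 1)"
    using s finite_S unfolding D_def
    by (simp add: card_cartesian_product card_permutations card_Pow)
  ultimately show ?thesis by simp
qed

end

theorem proposition2p2:
  fixes G :: "('a, 'b) monoid_scheme" and S :: "'a set" and n :: nat
  assumes "group G"
    and "n \<ge> 1"
    and "totally_symmetric G S"
    and "card S = n"
    and "\<forall>g\<in>S. \<exists>k::nat. k > 0 \<and> g [^]\<^bsub>G\<^esub> k = \<one>\<^bsub>G\<^esub>"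
  shows "infinite (carrier G) \<or> 2 ^ (n - 1) * fact n \<le> card (carrier G)"
proof -
  interpret totally_symmetric_subset G S
    using assms(1,3) by (rule totally_symmetric_subsetI)
  have "S \<noteq> {}"
    using assms(2,4) by auto
  then show ?thesis
    using card_carrier_lower_bound assms(4) by (auto simp: mult.commute)
qed

end
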